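(* Let $m\geq 2$, $n>1$ and $p\geq 1$ be integers and let $a_1,\ldots,a_m$ be positive integers with $\prod_{i=1}^m a_i\equiv 1\pmod 2$. The graph $a_1H_{n,p}\otimes a_2H_{n,p}\otimes\cdots\otimes a_mH_{n,p}$ is distance magic if and only if $n\equiv 0\pmod 2$ or $n\equiv p\equiv 1\pmod 2$.
   Context: A graph $G$ on $v$ vertices is distance magic if there is a bijection $f:V(G)\to\{1,\ldots,v\}$ and a constant $k$ such that for every vertex $x$, $\sum_{y\in N(x)}f(y)=k$, where $N(x)$ is the set of neighbours of $x$. $H_{n,p}$ denotes the complete multipartite graph with $p$ partite sets each of size $n$; $aH$ denotes the disjoint union of $a$ copies of $H$. The Kronecker (tensor) product $G\otimes H$ has vertex set $V(G)\times V(H)$, with $(g,h)\sim(g',h')$ iff $gg'\in E(G)$ and $hh'\in E(H)$. *)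

theory Defs
  imports Main
begin

text \<open>A (simple) graph is represented by a vertex set together with an adjacency
  relation; only adjacencies between vertices of the vertex set matter.\<close>
type_synonym 'a graph = "'a set \<times> ('a \<Rightarrow> 'a \<Rightarrow> bool)"

definition nbhd :: "'a graph \<Rightarrow> 'a \<Rightarrow> 'a set" where
  "nbhd G x = {y \<in> fst G. snd G x y}"

definition distance_magic :: "'a graph \<Rightarrow> bool" where
  "distance_magic G \<longleftrightarrow> finite (fst G) \<and>
     (\<exists>(f :: 'a \<Rightarrow> nat) (k :: nat). bij_betw f (fst G) {1..card (fst G)} \<and>
        (\<forall>x \<in> fst G. (\<Sum>y \<in> nbhd G x. f y) = k))"

text \<open>Complete multipartite graph H_{n,p}: p parts (index j) of size n (index k).\<close>
definition cmp_graph :: "nat \<Rightarrow> nat \<Rightarrow> (nat \<times> nat) graph" where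
  "cmp_graph n p = ({(j, k). j < p \<and> k < n}, \<lambda>(j, k) (j', k'). j \<noteq> j')"

definition copies :: "nat \<Rightarrow> 'a graph \<Rightarrow> (nat \<times> 'a) graph" where
  "copies a G = ({(c, x). c < a \<and> x \<in> fst G}, \<lambda>(c, x) (d, y). c = d \<and> snd G x y)"

definition kron_list :: "'a graph list \<Rightarrow> 'a list graph" where
  "kron_list Gs = ({xs. length xs = length Gs \<and> (\<forall>i < length Gs. xs ! i \<in> fst (Gs ! i))},
                   \<lambda>xs ys. \<forall>i < length Gs. snd (Gs ! i) (xs ! i) (ys ! i))"

end

theory Submission
  imports Defs
begin

(* A distance magic labelling f of a d-regular graph on v vertices with magic constant k
   satisfies v k = d (1 + ... + v) by double counting, so 2 k = d (v + 1).  Here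
   d = ((p - 1) n)^m and v = (a_1 ... a_m) (p n)^m, so n odd and p even is impossible.

   Conversely, two vertices that agree in the copy and the part of every coordinate have
   the same neighbourhood; these twin classes all have N = n^m elements, and every
   neighbourhood is a union of d / N of them.  It therefore suffices to label each class
   so that all classes have the same label sum, i.e. to fill a B x N rectangle with
   1, ..., B N so that all rows have the same sum.  Putting a permutation of
   q B + 1, ..., q B + B into column q, this is possible for even N (pair complementary
   columns) and for odd B and odd N >= 3 (add a balanced triple of columns); for odd n
   and odd p the number B of classes is odd because v is. *)

lemma card_lists_nth:
  assumes "\<forall>i<m. finite (S i)"
  shows "finite {xs. length xs = m \<and> (\<forall>i<m. xs!i \<in> S i)}"
    and "card {xs. length xs = m \<and> (\<forall>i<m. xs!i \<in> S i)} = (\<Prod>i<m. card (S i))"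
proof -
  have "finite {xs. length xs = m \<and> (\<forall>i<m. xs!i \<in> S i)} \<and>
        card {xs. length xs = m \<and> (\<forall>i<m. xs!i \<in> S i)} = (\<Prod>i<m. card (S i))"
    using assms
  proof (induction m)
    case 0
    have "{xs. length xs = 0 \<and> (\<forall>i<0. xs!i \<in> S i)} = {[]}" by auto
    then show ?case by simp
  next
    case (Suc m)
    let ?A = "{xs. length xs = m \<and> (\<forall>i<m. xs!i \<in> S i)}"
    have snoc: "{xs. length xs = Suc m \<and> (\<forall>i<Suc m. xs!i \<in> S i)} = (\<lambda>(xs, x). xs @ [x]) ` (?A \<times> S m)"
    proof (intro set_eqI iffI)
      fix ys assume ys: "ys \<in> {xs. length xs = Suc m \<and> (\<forall>i<Suc m. xs!i \<in> S i)}"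
      then have "ys \<noteq> []" by auto
      then have "ys = butlast ys @ [last ys]" by simp
      moreover have "butlast ys \<in> ?A" "last ys \<in> S m"
        using ys \<open>ys \<noteq> []\<close> by (simp_all add: nth_butlast last_conv_nth)
      ultimately show "ys \<in> (\<lambda>(xs, x). xs @ [x]) ` (?A \<times> S m)" by force
    qed (auto simp: nth_append less_Suc_eq)
    have "inj_on (\<lambda>(xs, x). xs @ [x]) (?A \<times> S m)" by (auto simp: inj_on_def)
    with Suc show ?case unfolding snoc by (simp add: card_image card_cartesian_product)
  qed
  then show "finite {xs. length xs = m \<and> (\<forall>i<m. xs!i \<in> S i)}"
    and "card {xs. length xs = m \<and> (\<forall>i<m. xs!i \<in> S i)} = (\<Prod>i<m. card (S i))" by auto
qed

lemma sum_by_classes: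
  assumes "finite A" and "\<forall>x\<in>A. (\<Sum>y\<in>{y\<in>A. g y = g x}. h y) = c"
  shows "sum h A = card (g ` A) * c"
proof -
  have "sum h A = (\<Sum>t\<in>g ` A. \<Sum>y\<in>{y\<in>A. g y = t}. h y)"
    using assms(1) by (rule sum.image_gen)
  also have "\<dots> = (\<Sum>t\<in>g ` A. c)"
    using assms(2) by (intro sum.cong) auto
  finally show ?thesis by simp
qed

lemma card_by_classes:
  assumes "finite A" and "\<forall>x\<in>A. card {y\<in>A. g y = g x} = N"
  shows "card A = card (g ` A) * N"
  using sum_by_classes[where h = "\<lambda>_. 1"] assms by simp

lemma inj_on_card_imp_bij_betw:
  assumes "inj_on f A" "f ` A \<subseteq> B" "finite B" "card A = card B"
  shows "bij_betw f A B"
  using assms card_image card_subset_eq unfolding bij_betw_def by metis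

definition regular :: "'a graph \<Rightarrow> nat \<Rightarrow> bool" where
  "regular G r \<longleftrightarrow> (\<forall>x\<in>fst G. card (nbhd G x) = r)"

definition undirected :: "'a graph \<Rightarrow> bool" where
  "undirected G \<longleftrightarrow> (\<forall>x\<in>fst G. \<forall>y\<in>fst G. snd G x y = snd G y x)"

definition twin_classes :: "'a graph \<Rightarrow> ('a \<Rightarrow> 'b) \<Rightarrow> bool" where
  "twin_classes G h \<longleftrightarrow> (\<forall>x\<in>fst G. \<forall>y\<in>fst G. \<forall>y'\<in>fst G. h y = h y' \<longrightarrow> snd G x y = snd G x y')"

definition class_size :: "'a graph \<Rightarrow> ('a \<Rightarrow> 'b) \<Rightarrow> nat \<Rightarrow> bool" where
  "class_size G h N \<longleftrightarrow> (\<forall>x\<in>fst G. card {y\<in>fst G. h y = h x} = N)"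

lemma nbhd_kron_list:
  "nbhd (kron_list Gs) xs =
     {ys. length ys = length Gs \<and> (\<forall>i<length Gs. ys!i \<in> nbhd (Gs!i) (xs!i))}"
  by (auto simp: nbhd_def kron_list_def)

lemma
  assumes "\<forall>i<length Gs. finite (fst (Gs!i))"
  shows finite_kron_list: "finite (fst (kron_list Gs))"
    and card_kron_list: "card (fst (kron_list Gs)) = (\<Prod>i<length Gs. card (fst (Gs!i)))"
  using card_lists_nth[of "length Gs" "\<lambda>i. fst (Gs!i)"] assms by (simp_all add: kron_list_def)

lemma regular_kron_list:
  assumes "\<forall>i<length Gs. finite (fst (Gs!i)) \<and> regular (Gs!i) (r i)"
  shows "regular (kron_list Gs) (\<Prod>i<length Gs. r i)"
  unfolding regular_def
proof
  fix xs assume "xs \<in> fst (kron_list Gs)"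
  then have "\<forall>i<length Gs. card (nbhd (Gs!i) (xs!i)) = r i"
    using assms by (auto simp: kron_list_def regular_def)
  moreover have "\<forall>i<length Gs. finite (nbhd (Gs!i) (xs!i))"
    using assms by (auto simp: nbhd_def)
  ultimately show "card (nbhd (kron_list Gs) xs) = (\<Prod>i<length Gs. r i)"
    unfolding nbhd_kron_list
    using card_lists_nth(2)[of "length Gs" "\<lambda>i. nbhd (Gs!i) (xs!i)"] by simp
qed

lemma undirected_kron_list:
  assumes "\<forall>i<length Gs. undirected (Gs!i)"
  shows "undirected (kron_list Gs)"
  using assms by (auto simp: undirected_def kron_list_def)

lemma twin_classes_kron_list:
  assumes "\<forall>i<length Gs. twin_classes (Gs!i) h"
  shows "twin_classes (kron_list Gs) (map h)"
  unfolding twin_classes_def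
proof (intro ballI impI)
  fix xs ys ys' assume "xs \<in> fst (kron_list Gs)" "ys \<in> fst (kron_list Gs)" "ys' \<in> fst (kron_list Gs)"
    and "map h ys = map h ys'"
  then have "\<forall>i<length Gs. snd (Gs!i) (xs!i) (ys!i) = snd (Gs!i) (xs!i) (ys'!i)"
    using assms by (auto simp: twin_classes_def kron_list_def list_eq_iff_nth_eq)
  then show "snd (kron_list Gs) xs ys = snd (kron_list Gs) xs ys'"
    by (simp add: kron_list_def)
qed

lemma class_size_kron_list:
  assumes "\<forall>i<length Gs. finite (fst (Gs!i)) \<and> class_size (Gs!i) h (N i)"
  shows "class_size (kron_list Gs) (map h) (\<Prod>i<length Gs. N i)"
  unfolding class_size_def
proof
  fix xs assume xs: "xs \<in> fst (kron_list Gs)"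
  have "{ys \<in> fst (kron_list Gs). map h ys = map h xs} =
        {ys. length ys = length Gs \<and> (\<forall>i<length Gs. ys!i \<in> {y\<in>fst (Gs!i). h y = h (xs!i)})}"
    using xs by (auto simp: kron_list_def list_eq_iff_nth_eq)
  moreover have "\<forall>i<length Gs. card {y\<in>fst (Gs!i). h y = h (xs!i)} = N i"
    using xs assms by (auto simp: kron_list_def class_size_def)
  ultimately show "card {ys \<in> fst (kron_list Gs). map h ys = map h xs} = (\<Prod>i<length Gs. N i)"
    using card_lists_nth(2)[of "length Gs" "\<lambda>i. {y\<in>fst (Gs!i). h y = h (xs!i)}"] assms by simp
qed

lemma fst_copies: "fst (copies a G) = {..<a} \<times> fst G"
  by (auto simp: copies_def)

lemma nbhd_copies: "c < a \<Longrightarrow> nbhd (copies a G) (c, x) = {c} \<times> nbhd G x"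
  by (auto simp: nbhd_def copies_def)

lemma regular_copies: "regular G r \<Longrightarrow> regular (copies a G) r"
  by (auto simp: regular_def fst_copies nbhd_copies card_cartesian_product)

lemma undirected_copies: "undirected G \<Longrightarrow> undirected (copies a G)"
  by (auto simp: undirected_def copies_def)

lemma fst_cmp_graph: "fst (cmp_graph n p) = {..<p} \<times> {..<n}"
  by (auto simp: cmp_graph_def)

lemma regular_cmp_graph: "regular (cmp_graph n p) ((p - 1) * n)"
proof -
  have "nbhd (cmp_graph n p) (j, k) = ({..<p} - {j}) \<times> {..<n}" for j k
    by (auto simp: nbhd_def cmp_graph_def)
  then show ?thesis by (auto simp: regular_def fst_cmp_graph card_cartesian_product)
qed

lemma undirected_cmp_graph: "undirected (cmp_graph n p)"
  by (auto simp: undirected_def cmp_graph_def)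

text \<open>Column \<open>q\<close> of the rectangle below is a permutation of \<open>{..<B}\<close>. Columns are paired as
  \<open>b\<close> and \<open>B - 1 - b\<close>; for odd \<open>N\<close> the first three columns instead are \<open>b\<close>, \<open>(b + s) mod B\<close>
  and \<open>3 s - b - (b + s) mod B\<close> with \<open>B = 2 s + 1\<close>, which add up to \<open>3 s\<close> in every row.\<close>

definition balanced_perm :: "nat \<Rightarrow> nat \<Rightarrow> nat \<Rightarrow> nat \<Rightarrow> nat" where
  "balanced_perm N B q b =
     (if odd N \<and> q = 1 then (b + B div 2) mod B
      else if odd N \<and> q = 2 then 3 * (B div 2) - b - (b + B div 2) mod B
      else if even q then b else B - 1 - b)"

lemma half_rotation_eq:
  fixes b B :: nat
  assumes "odd B" and "b < B"
  shows "(b + B div 2) mod B = (if b \<le> B div 2 then b + B div 2 else b - B div 2 - 1)"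
proof -
  have B: "B = 2 * (B div 2) + 1" using assms(1) by simp
  show ?thesis
  proof (cases "b \<le> B div 2")
    case True
    with assms(2) B show ?thesis by simp
  next
    case False
    then have "b + B div 2 = (b - B div 2 - 1) + B" using B by linarith
    then have "(b + B div 2) mod B = (b - B div 2 - 1 + B) mod B" by (simp only:)
    also have "\<dots> = b - B div 2 - 1" using assms(2) by simp
    finally show ?thesis using False by simp
  qed
qed

lemma half_rotation_inj:
  fixes B b b' :: nat
  assumes "odd B" "b < B" "b' < B" and "(b + B div 2) mod B = (b' + B div 2) mod B"
  shows "b = b'"
  using assms half_rotation_eq[OF assms(1,2)] half_rotation_eq[OF assms(1,3)]
  by (simp split: if_splits) linarith+

lemma half_rotation_add_le:
  fixes B b :: nat
  assumes "odd B" "b < B"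
  shows "b + (b + B div 2) mod B \<le> 3 * (B div 2)"
proof -
  define s where "s = B div 2"
  have "B = 2 * s + 1" using assms(1) by (simp add: s_def)
  then show ?thesis using assms(2) half_rotation_eq[OF assms] unfolding s_def[symmetric]
    by (simp split: if_splits)
qed

lemma half_rotation_add_inj:
  fixes B b b' :: nat
  assumes "odd B" "b < B" "b' < B"
    and "b + (b + B div 2) mod B = b' + (b' + B div 2) mod B"
  shows "b = b'"
proof -
  define s where "s = B div 2"
  have B: "B = 2 * s + 1" using assms(1) by (simp add: s_def)
  have parity: "2 * x + 1 \<noteq> 2 * y" for x y :: nat by presburger
  show ?thesis
    using assms(2-4) half_rotation_eq[OF assms(1,2)] half_rotation_eq[OF assms(1,3)]
      parity[of "b + s" b'] parity[of "b' + s" b] B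
    unfolding s_def[symmetric] by (simp split: if_splits)
qed

lemma balanced_perm_lt:
  assumes "b < B" and "even N \<or> odd B"
  shows "balanced_perm N B q b < B"
proof (cases "odd N \<and> q = 2")
  case True
  with assms have "odd B" by auto
  with assms(1) True show ?thesis
    by (auto simp: balanced_perm_def half_rotation_eq)
qed (use assms in \<open>auto simp: balanced_perm_def\<close>)

lemma balanced_perm_inj:
  assumes "even N \<or> odd B"
  shows "inj_on (balanced_perm N B q) {..<B}"
proof (cases "odd N \<and> (q = 1 \<or> q = 2)")
  case True
  with assms have oB: "odd B" and "odd N" by simp_all
  have "b = b'" if "b < B" "b' < B" "balanced_perm N B q b = balanced_perm N B q b'" for b b'
  proof (cases "q = 1")
    case True
    with that \<open>odd N\<close> show ?thesis
      using half_rotation_inj[OF oB that(1,2)] by (simp add: balanced_perm_def)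
  next
    case False
    with that True have "b + (b + B div 2) mod B = b' + (b' + B div 2) mod B"
      using half_rotation_add_le[OF oB that(1)] half_rotation_add_le[OF oB that(2)]
      by (simp add: balanced_perm_def) linarith
    then show ?thesis by (rule half_rotation_add_inj[OF oB that(1,2)])
  qed
  then show ?thesis by (auto simp: inj_on_def)
qed (auto simp: inj_on_def balanced_perm_def)

lemma complementary_pairs_sum:
  fixes b B c r :: nat
  assumes "b < B"
  shows "(\<Sum>q\<in>{c..<c + 2 * r}. if even q then b else B - 1 - b) = r * (B - 1)"
proof (induction r)
  case (Suc r)
  have "{c..<c + 2 * Suc r} = {c..<c + 2 * r} \<union> {c + 2 * r, Suc (c + 2 * r)}" by auto
  with Suc assms show ?case by simp
qed simp

lemma balanced_perm_row_sum:
  assumes "b < B" and "even N \<or> (odd B \<and> 3 \<le> N)"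
  shows "(\<Sum>q<N. balanced_perm N B q b) =
    (if odd N then 3 * (B div 2) + (N - 3) div 2 * (B - 1) else N div 2 * (B - 1))"
proof (cases "odd N")
  case True
  define r where "r = (N - 3) div 2"
  from True assms have oB: "odd B" and N: "N = 3 + 2 * r" by (auto simp: r_def)
  have "(\<Sum>q<N. balanced_perm N B q b) =
        (\<Sum>q<3. balanced_perm N B q b) + (\<Sum>q\<in>{3..<3 + 2 * r}. balanced_perm N B q b)"
    by (subst N) (simp add: lessThan_atLeast0 sum.atLeastLessThan_concat)
  also have "(\<Sum>q<3. balanced_perm N B q b) = 3 * (B div 2)"
    using True half_rotation_add_le[OF oB assms(1)] by (simp add: numeral_3_eq_3 balanced_perm_def)
  also have "(\<Sum>q\<in>{3..<3 + 2 * r}. balanced_perm N B q b) =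
        (\<Sum>q\<in>{3..<3 + 2 * r}. if even q then b else B - 1 - b)"
    by (intro sum.cong) (auto simp: balanced_perm_def)
  also have "\<dots> = r * (B - 1)" by (rule complementary_pairs_sum[OF assms(1)])
  finally show ?thesis using True by (simp add: r_def)
next
  case False
  then have N: "N = 0 + 2 * (N div 2)" by simp
  have "(\<Sum>q<N. balanced_perm N B q b) = (\<Sum>q\<in>{0..<0 + 2 * (N div 2)}. if even q then b else B - 1 - b)"
    using False by (subst N) (simp add: lessThan_atLeast0 balanced_perm_def)
  also have "\<dots> = N div 2 * (B - 1)" by (rule complementary_pairs_sum[OF assms(1)])
  finally show ?thesis using False by simp
qed

lemma magic_rectangle:
  fixes N B :: nat
  assumes "even N \<or> (odd B \<and> 3 \<le> N)"
  obtains L R where "bij_betw L ({..<B} \<times> {..<N}) {1..B * N}"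
    and "\<forall>b<B. (\<Sum>q<N. L (b, q)) = R"
proof
  define L where "L = (\<lambda>(b, q). q * B + balanced_perm N B q b + 1)"
  have perm_lt: "balanced_perm N B q b < B" if "b < B" for q b
    using balanced_perm_lt[OF that] assms by auto
  show "bij_betw L ({..<B} \<times> {..<N}) {1..B * N}"
  proof (rule inj_on_card_imp_bij_betw)
    show "inj_on L ({..<B} \<times> {..<N})"
    proof (rule inj_onI, clarify)
      fix b q b' q' assume b: "b < B" "b' < B" and "L (b, q) = L (b', q')"
      then have eq: "q * B + balanced_perm N B q b = q' * B + balanced_perm N B q' b'"
        by (simp add: L_def)
      have "q = (q * B + balanced_perm N B q b) div B" using perm_lt[OF b(1), of q] by simp
      also have "\<dots> = q'" unfolding eq using perm_lt[OF b(2), of q'] by simp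
      finally have "q = q'" .
      with eq show "b = b' \<and> q = q'"
        using balanced_perm_inj assms b by (auto dest: inj_onD)
    qed
    show "L ` ({..<B} \<times> {..<N}) \<subseteq> {1..B * N}"
    proof clarify
      fix b q assume "b < B" "q < N"
      have "q * B + balanced_perm N B q b + 1 \<le> (q + 1) * B"
        using perm_lt[OF \<open>b < B\<close>, of q] by simp
      moreover have "(q + 1) * B \<le> N * B"
        using \<open>q < N\<close> by (intro mult_right_mono) auto
      ultimately show "L (b, q) \<in> {1..B * N}" by (simp add: L_def mult.commute)
    qed
  qed (simp_all add: card_cartesian_product)
  show "\<forall>b<B. (\<Sum>q<N. L (b, q)) = (\<Sum>q<N. q * B + 1) +
      (if odd N then 3 * (B div 2) + (N - 3) div 2 * (B - 1) else N div 2 * (B - 1))"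
  proof (intro allI impI)
    fix b assume "b < B"
    have "(\<Sum>q<N. L (b, q)) = (\<Sum>q<N. (q * B + 1) + balanced_perm N B q b)"
      by (simp add: L_def)
    also have "\<dots> = (\<Sum>q<N. q * B + 1) + (\<Sum>q<N. balanced_perm N B q b)"
      by (rule sum.distrib)
    finally show "(\<Sum>q<N. L (b, q)) = (\<Sum>q<N. q * B + 1) +
        (if odd N then 3 * (B div 2) + (N - 3) div 2 * (B - 1) else N div 2 * (B - 1))"
      using balanced_perm_row_sum[OF \<open>b < B\<close> assms] by simp
  qed
qed

lemma grid_bijection:
  assumes "finite V" and "\<forall>x\<in>V. card {y\<in>V. g y = g x} = N"
  obtains e where "bij_betw e V ({..<card (g ` V)} \<times> {..<N})"
    and "\<forall>x\<in>V. \<forall>y\<in>V. fst (e x) = fst (e y) \<longleftrightarrow> g x = g y"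
proof -
  obtain i where i: "bij_betw i (g ` V) {..<card (g ` V)}"
    using ex_bij_betw_finite_nat[of "g ` V"] assms(1) by (auto simp: atLeast0LessThan)
  have "\<forall>t\<in>g ` V. \<exists>j. bij_betw j {y\<in>V. g y = t} {..<N}"
    using assms by (auto intro: finite_same_card_bij)
  then obtain j where j: "\<forall>t\<in>g ` V. bij_betw (j t) {y\<in>V. g y = t} {..<N}"
    by (rule bchoice[THEN exE])
  define e where "e x = (i (g x), j (g x) x)" for x
  have fst_e: "fst (e x) = fst (e y) \<longleftrightarrow> g x = g y" if "x \<in> V" "y \<in> V" for x y
    using that i by (auto simp: e_def bij_betw_def inj_on_def)
  have "bij_betw e V ({..<card (g ` V)} \<times> {..<N})"
  proof (rule inj_on_card_imp_bij_betw)
    show "inj_on e V"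
    proof (rule inj_onI)
      fix x y assume "x \<in> V" "y \<in> V" "e x = e y"
      with fst_e have "g x = g y" "j (g x) x = j (g x) y" by (auto simp: e_def)
      moreover have "inj_on (j (g x)) {z\<in>V. g z = g x}"
        using j \<open>x \<in> V\<close> by (simp add: bij_betw_def)
      ultimately show "x = y"
        using \<open>x \<in> V\<close> \<open>y \<in> V\<close> by (auto dest: inj_onD)
    qed
    show "e ` V \<subseteq> {..<card (g ` V)} \<times> {..<N}"
    proof (rule image_subsetI)
      fix x assume "x \<in> V"
      then have "i (g x) < card (g ` V)" "j (g x) x < N"
        using i j by (auto simp: bij_betw_def)
      then show "e x \<in> {..<card (g ` V)} \<times> {..<N}" by (simp add: e_def)
    qed
    show "card V = card ({..<card (g ` V)} \<times> {..<N})"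
      using card_by_classes[OF assms] by (simp add: card_cartesian_product)
  qed simp
  with fst_e that show ?thesis by blast
qed

lemma sum_class_by_grid:
  assumes e: "bij_betw e V ({..<B} \<times> {..<N})"
    and fst_e: "\<forall>x\<in>V. \<forall>y\<in>V. fst (e x) = fst (e y) \<longleftrightarrow> g x = g y"
    and "x \<in> V"
  shows "(\<Sum>y\<in>{y\<in>V. g y = g x}. L (e y)) = (\<Sum>q<N. L (fst (e x), q))"
proof -
  have "e x \<in> {..<B} \<times> {..<N}" using e \<open>x \<in> V\<close> by (auto simp: bij_betw_def)
  then have "fst (e x) < B" by (simp add: mem_Times_iff)
  have "e ` {y\<in>V. g y = g x} = {fst (e x)} \<times> {..<N}"
  proof (intro equalityI subsetI)
    fix z assume z: "z \<in> {fst (e x)} \<times> {..<N}"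
    then obtain y where "y \<in> V" "z = e y"
      using e \<open>fst (e x) < B\<close> by (auto simp: bij_betw_def)
    moreover have "fst (e y) = fst (e x)" using z \<open>z = e y\<close> by auto
    ultimately show "z \<in> e ` {y\<in>V. g y = g x}" using fst_e \<open>x \<in> V\<close> by auto
  next
    fix z assume "z \<in> e ` {y\<in>V. g y = g x}"
    then obtain y where y: "y \<in> V" "g y = g x" "z = e y" by auto
    then have "e y \<in> {..<B} \<times> {..<N}" using e by (auto simp: bij_betw_def)
    with y fst_e \<open>x \<in> V\<close> show "z \<in> {fst (e x)} \<times> {..<N}" by (auto simp: mem_Times_iff)
  qed
  then have "bij_betw e {y\<in>V. g y = g x} ({fst (e x)} \<times> {..<N})"
    using e by (auto intro: bij_betw_subset)
  then have "(\<Sum>y\<in>{y\<in>V. g y = g x}. L (e y)) = (\<Sum>z\<in>{fst (e x)} \<times> {..<N}. L z)"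
    by (rule sum.reindex_bij_betw)
  also have "{fst (e x)} \<times> {..<N} = Pair (fst (e x)) ` {..<N}" by auto
  finally show ?thesis by (simp add: sum.reindex inj_on_def)
qed

lemma sum_nbhd_by_twin_classes:
  assumes fin: "finite (fst G)" and "regular G r"
    and twins: "twin_classes G h" and size: "class_size G h N"
    and class_sum: "\<forall>x\<in>fst G. (\<Sum>y\<in>{y\<in>fst G. h y = h x}. f y) = R"
    and x: "x \<in> fst G"
  shows "(\<Sum>y\<in>nbhd G x. f y) = r div N * R"
proof -
  have nbhd_fin: "finite (nbhd G x)" using fin by (simp add: nbhd_def)
  have nbhd_sub: "nbhd G x \<subseteq> fst G" by (auto simp: nbhd_def)
  have nbhd_classes: "{y\<in>nbhd G x. h y = h z} = {y\<in>fst G. h y = h z}" if "z \<in> nbhd G x" for z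
    using that twins x unfolding nbhd_def twin_classes_def by blast
  have "\<forall>z\<in>nbhd G x. card {y\<in>nbhd G x. h y = h z} = N"
    using nbhd_classes size nbhd_sub unfolding class_size_def by auto
  then have "card (nbhd G x) = card (h ` nbhd G x) * N"
    by (rule card_by_classes[OF nbhd_fin])
  moreover have "N > 0"
  proof -
    have "x \<in> {y\<in>fst G. h y = h x}" using x by simp
    then show ?thesis using size fin x card_gt_0_iff[of "{y\<in>fst G. h y = h x}"]
      unfolding class_size_def by auto
  qed
  ultimately have "card (h ` nbhd G x) = r div N"
    using \<open>regular G r\<close> x unfolding regular_def by simp
  moreover have "\<forall>z\<in>nbhd G x. (\<Sum>y\<in>{y\<in>nbhd G x. h y = h z}. f y) = R"
    using nbhd_classes class_sum nbhd_sub by auto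
  then have "(\<Sum>y\<in>nbhd G x. f y) = card (h ` nbhd G x) * R"
    by (rule sum_by_classes[OF nbhd_fin])
  ultimately show ?thesis by simp
qed

lemma distance_magic_if_twin_classes:
  assumes fin: "finite (fst G)" and "regular G r"
    and "twin_classes G h" and size: "class_size G h N"
    and "even N \<or> (odd (card (h ` fst G)) \<and> 3 \<le> N)"
  shows "distance_magic G"
proof -
  let ?V = "fst G" and ?B = "card (h ` fst G)"
  have classes: "\<forall>x\<in>?V. card {y\<in>?V. h y = h x} = N"
    using size by (simp add: class_size_def)
  obtain e where e: "bij_betw e ?V ({..<?B} \<times> {..<N})"
    and fst_e: "\<forall>x\<in>?V. \<forall>y\<in>?V. fst (e x) = fst (e y) \<longleftrightarrow> h x = h y"
    by (rule grid_bijection[OF fin classes])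
  obtain L R where L: "bij_betw L ({..<?B} \<times> {..<N}) {1..?B * N}"
    and rows: "\<forall>b<?B. (\<Sum>q<N. L (b, q)) = R"
    by (rule magic_rectangle[OF assms(5)])
  have "bij_betw (L \<circ> e) ?V {1..card ?V}"
    unfolding card_by_classes[OF fin classes] using e L by (rule bij_betw_trans)
  moreover have "\<forall>x\<in>?V. (\<Sum>y\<in>{y\<in>?V. h y = h x}. (L \<circ> e) y) = R"
  proof
    fix x assume "x \<in> ?V"
    then have "e x \<in> {..<?B} \<times> {..<N}" using e by (auto simp: bij_betw_def)
    then have "fst (e x) < ?B" by (simp add: mem_Times_iff)
    with rows sum_class_by_grid[OF e fst_e \<open>x \<in> ?V\<close>, of L]
    show "(\<Sum>y\<in>{y\<in>?V. h y = h x}. (L \<circ> e) y) = R" by simp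
  qed
  then have "\<forall>x\<in>?V. (\<Sum>y\<in>nbhd G x. (L \<circ> e) y) = r div N * R"
    using sum_nbhd_by_twin_classes[OF fin assms(2-4)] by blast
  ultimately show ?thesis
    unfolding distance_magic_def using fin by blast
qed

lemma distance_magic_regular_parity:
  assumes "distance_magic G" and "undirected G" and "regular G r" and "fst G \<noteq> {}"
  shows "even (r * (card (fst G) + 1))"
proof -
  let ?V = "fst G" and ?v = "card (fst G)"
  obtain f :: "_ \<Rightarrow> nat" and k where fin: "finite ?V" and f: "bij_betw f ?V {1..?v}"
    and k: "\<forall>x\<in>?V. (\<Sum>y\<in>nbhd G x. f y) = k"
    using assms(1) unfolding distance_magic_def by blast
  have "?v * k = (\<Sum>x\<in>?V. \<Sum>y\<in>nbhd G x. f y)" using k by simp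
  also have "\<dots> = (\<Sum>y\<in>?V. \<Sum>x\<in>{x\<in>?V. snd G x y}. f y)"
    unfolding nbhd_def by (rule sum.swap_restrict[OF fin fin])
  also have "\<dots> = (\<Sum>y\<in>?V. r * f y)"
  proof (rule sum.cong[OF refl])
    fix y assume "y \<in> ?V"
    then have "{x\<in>?V. snd G x y} = nbhd G y"
      using assms(2) unfolding undirected_def nbhd_def by auto
    then show "(\<Sum>x\<in>{x\<in>?V. snd G x y}. f y) = r * f y"
      using assms(3) \<open>y \<in> ?V\<close> unfolding regular_def by simp
  qed
  also have "\<dots> = r * (\<Sum>i\<in>{1..?v}. i)"
    using sum.reindex_bij_betw[OF f, of "\<lambda>i. i"] by (simp add: sum_distrib_left[symmetric])
  finally have "2 * (?v * k) = r * (2 * (\<Sum>i\<in>{1..?v}. i))" by simp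
  also have "2 * (\<Sum>i\<in>{1..?v}. i) = ?v * (?v + 1)"
    using double_gauss_sum_from_Suc_0[of ?v, where ?'a = nat] by simp
  finally have "?v * (2 * k) = ?v * (r * (?v + 1))" by (simp add: algebra_simps)
  moreover have "?v > 0" using fin assms(4) by auto
  ultimately have "2 * k = r * (?v + 1)" by simp
  then show ?thesis by (metis dvd_triv_left)
qed

definition copy_part :: "nat \<times> nat \<times> nat \<Rightarrow> nat \<times> nat" where
  "copy_part = (\<lambda>(c, j, k). (c, j))"

lemma twin_classes_copies_cmp_graph: "twin_classes (copies a (cmp_graph n p)) copy_part"
  by (auto simp: twin_classes_def copies_def cmp_graph_def copy_part_def)

lemma class_size_copies_cmp_graph: "class_size (copies a (cmp_graph n p)) copy_part n"
  unfolding class_size_def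
proof
  fix x assume "x \<in> fst (copies a (cmp_graph n p))"
  then obtain c j k where "x = (c, j, k)" "c < a" "j < p"
    by (auto simp: fst_copies fst_cmp_graph)
  then have "{y \<in> fst (copies a (cmp_graph n p)). copy_part y = copy_part x} = {c} \<times> {j} \<times> {..<n}"
    by (auto simp: fst_copies fst_cmp_graph copy_part_def)
  then show "card {y \<in> fst (copies a (cmp_graph n p)). copy_part y = copy_part x} = n"
    by (simp add: card_cartesian_product)
qed

definition cmp_product :: "(nat \<Rightarrow> nat) \<Rightarrow> nat \<Rightarrow> nat \<Rightarrow> nat \<Rightarrow> (nat \<times> nat \<times> nat) list graph" where
  "cmp_product a m n p = kron_list (map (\<lambda>i. copies (a i) (cmp_graph n p)) [0..<m])"

lemma finite_components_cmp_product:
  "\<forall>i<length (map (\<lambda>i. copies (a i) (cmp_graph n p)) [0..<m]).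
     finite (fst (map (\<lambda>i. copies (a i) (cmp_graph n p)) [0..<m] ! i))"
  by (simp add: fst_copies fst_cmp_graph)

lemma finite_cmp_product: "finite (fst (cmp_product a m n p))"
  unfolding cmp_product_def by (rule finite_kron_list[OF finite_components_cmp_product])

lemma card_cmp_product: "card (fst (cmp_product a m n p)) = (\<Prod>i<m. a i) * (p * n) ^ m"
  unfolding cmp_product_def card_kron_list[OF finite_components_cmp_product]
  by (simp add: fst_copies fst_cmp_graph card_cartesian_product prod.distrib)

lemma regular_cmp_product: "regular (cmp_product a m n p) (((p - 1) * n) ^ m)"
proof -
  have "regular (copies (a i) (cmp_graph n p)) ((p - 1) * n)" for i
    by (intro regular_copies regular_cmp_graph)
  then show ?thesis
    using regular_kron_list[of "map (\<lambda>i. copies (a i) (cmp_graph n p)) [0..<m]" "\<lambda>_. (p - 1) * n"]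
    by (simp add: cmp_product_def fst_copies fst_cmp_graph)
qed

lemma undirected_cmp_product: "undirected (cmp_product a m n p)"
  by (simp add: cmp_product_def undirected_kron_list undirected_copies undirected_cmp_graph)

lemma twin_classes_cmp_product: "twin_classes (cmp_product a m n p) (map copy_part)"
  by (simp add: cmp_product_def twin_classes_kron_list twin_classes_copies_cmp_graph)

lemma class_size_cmp_product: "class_size (cmp_product a m n p) (map copy_part) (n ^ m)"
  using class_size_kron_list[of "map (\<lambda>i. copies (a i) (cmp_graph n p)) [0..<m]" copy_part "\<lambda>_. n"]
  by (simp add: cmp_product_def fst_copies fst_cmp_graph class_size_copies_cmp_graph)

theorem theorem17:
  fixes m n p :: nat and a :: "nat \<Rightarrow> nat"
  assumes "m \<ge> 2" and "n > 1" and "p \<ge> 1"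
    and "\<forall>i < m. a i > 0"
    and "odd (\<Prod>i < m. a i)"
  shows "distance_magic (kron_list (map (\<lambda>i. copies (a i) (cmp_graph n p)) [0..<m]))
         \<longleftrightarrow> (even n \<or> (odd n \<and> odd p))"
proof -
  let ?G = "cmp_product a m n p" and ?B = "card (map copy_part ` fst (cmp_product a m n p))"
  have "0 < card (fst ?G)"
    using odd_pos[OF assms(5)] assms(2,3) by (simp add: card_cmp_product)
  then have nonempty: "fst ?G \<noteq> {}" by auto
  have card_classes: "card (fst ?G) = ?B * n ^ m"
    using finite_cmp_product class_size_cmp_product unfolding class_size_def by (rule card_by_classes)
  show ?thesis
    unfolding cmp_product_def[symmetric]
  proof
    assume "distance_magic ?G"
    from distance_magic_regular_parity[OF this undirected_cmp_product regular_cmp_product nonempty]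
    show "even n \<or> (odd n \<and> odd p)"
      using assms(1,3) by (auto simp: card_cmp_product)
  next
    assume n_p: "even n \<or> (odd n \<and> odd p)"
    have "even (n ^ m) \<or> (odd ?B \<and> 3 \<le> n ^ m)"
    proof (cases "even n")
      case False
      with assms(2) have "3 \<le> n" by presburger
      also have "n \<le> n ^ m" using assms(1,2) by (simp add: self_le_power)
      moreover have "odd (card (fst ?G))" using False n_p assms(5) by (simp add: card_cmp_product)
      then have "odd ?B" unfolding card_classes by simp
      ultimately show ?thesis by simp
    qed (use assms(1) in simp)
    then show "distance_magic ?G"
      by (rule distance_magic_if_twin_classes[OF finite_cmp_product regular_cmp_product
            twin_classes_cmp_product class_size_cmp_product])
  qed
qed

end
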